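(* Let the timeline be $(\mathbb{Z},\leq)$, let $\Pi$ be a propositional DatalogMTL program, let $Q$ be a proposition and $t_B\le t_E$ integers, and let $B,E,Q'$ be propositions not occurring in $\Pi$ (nor in the datasets considered). Let $\Pi^Q=\Pi\cup\{Q'\leftarrow Q\,\mathcal{U}_{[0,\infty)}\,E,\ \bot\leftarrow B\wedge Q'\}$. Then for every dataset $\mathcal{D}^\dagger$ that is $\Pi$-consistent, the following are equivalent: (1) $(\mathcal{D}^\dagger,\Pi)\models Q@[t_B,t_E]$; (2) $\mathcal{D}^\dagger\cup\{B@\{t_B-1\},E@\{t_E+1\}\}$ is $\Pi^Q$-inconsistent.
   Context: A propositional DatalogMTL program uses only nullary predicates (propositions). $\mathfrak{M},t\models A\,\mathcal{U}_\varrho A'$ iff there is $t'$ with $t'-t\in\varrho$, $\mathfrak{M},t'\models A'$, and $\mathfrak{M},s\models A$ for all $s\in(t,t')$. A dataset is a finite set of facts $P@\iota$; it is $\Pi$-consistent if it has a model that is also a model of $\Pi$; $(\mathcal{D},\Pi)\models Q@\iota$ means every such model makes $Q$ true at every $t\in\iota$. *)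

theory Defs
  imports Main
begin

text \<open>Metric intervals (for temporal operators): (a, None) is [a,\<infinity>), (a, Some b) is [a,b].
  Over the integers every interval with integer/infinite endpoints is of this form (or empty).\<close>
type_synonym ival = "int \<times> int option"

fun ival_mem :: "ival \<Rightarrow> int \<Rightarrow> bool" where
  "ival_mem (a, None) d = (a \<le> d)"
| "ival_mem (a, Some b) d = (a \<le> d \<and> d \<le> b)"

fun wf_ival :: "ival \<Rightarrow> bool" where
  "wf_ival (a, None) = (0 \<le> a)"
| "wf_ival (a, Some b) = (0 \<le> a \<and> a \<le> b)"

datatype 'p mtl =
    MTop | MBot | MProp 'p
  | DiaMinus ival "'p mtl" | DiaPlus ival "'p mtl"
  | BoxMinus ival "'p mtl" | BoxPlus ival "'p mtl"
  | Since "'p mtl" ival "'p mtl" | Until "'p mtl" ival "'p mtl"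

type_synonym 'p interp = "int \<Rightarrow> 'p \<Rightarrow> bool"

fun holds :: "'p interp \<Rightarrow> int \<Rightarrow> 'p mtl \<Rightarrow> bool" where
  "holds M t MTop = True"
| "holds M t MBot = False"
| "holds M t (MProp p) = M t p"
| "holds M t (DiaMinus r A) = (\<exists>t'. ival_mem r (t - t') \<and> holds M t' A)"
| "holds M t (DiaPlus r A) = (\<exists>t'. ival_mem r (t' - t) \<and> holds M t' A)"
| "holds M t (BoxMinus r A) = (\<forall>t'. ival_mem r (t - t') \<longrightarrow> holds M t' A)"
| "holds M t (BoxPlus r A) = (\<forall>t'. ival_mem r (t' - t) \<longrightarrow> holds M t' A)"
| "holds M t (Since A r A') = (\<exists>t'. ival_mem r (t - t') \<and> holds M t' A' \<and>
      (\<forall>s. t' < s \<and> s < t \<longrightarrow> holds M s A))"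
| "holds M t (Until A r A') = (\<exists>t'. ival_mem r (t' - t) \<and> holds M t' A' \<and>
      (\<forall>s. t < s \<and> s < t' \<longrightarrow> holds M s A))"

fun wf_mtl :: "'p mtl \<Rightarrow> bool" where
  "wf_mtl (DiaMinus r A) = (wf_ival r \<and> wf_mtl A)"
| "wf_mtl (DiaPlus r A) = (wf_ival r \<and> wf_mtl A)"
| "wf_mtl (BoxMinus r A) = (wf_ival r \<and> wf_mtl A)"
| "wf_mtl (BoxPlus r A) = (wf_ival r \<and> wf_mtl A)"
| "wf_mtl (Since A r A') = (wf_ival r \<and> wf_mtl A \<and> wf_mtl A')"
| "wf_mtl (Until A r A') = (wf_ival r \<and> wf_mtl A \<and> wf_mtl A')"
| "wf_mtl _ = True"

fun props_mtl :: "'p mtl \<Rightarrow> 'p set" where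
  "props_mtl MTop = {}"
| "props_mtl MBot = {}"
| "props_mtl (MProp p) = {p}"
| "props_mtl (DiaMinus r A) = props_mtl A"
| "props_mtl (DiaPlus r A) = props_mtl A"
| "props_mtl (BoxMinus r A) = props_mtl A"
| "props_mtl (BoxPlus r A) = props_mtl A"
| "props_mtl (Since A r A') = props_mtl A \<union> props_mtl A'"
| "props_mtl (Until A r A') = props_mtl A \<union> props_mtl A'"

datatype 'p hatom = HProp 'p | HBoxMinus ival "'p hatom" | HBoxPlus ival "'p hatom"

fun hatom_mtl :: "'p hatom \<Rightarrow> 'p mtl" where
  "hatom_mtl (HProp p) = MProp p"
| "hatom_mtl (HBoxMinus r H) = BoxMinus r (hatom_mtl H)"
| "hatom_mtl (HBoxPlus r H) = BoxPlus r (hatom_mtl H)"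

datatype 'p rule = Rule "'p hatom" "'p mtl list" | Constraint "'p mtl list"

fun holds_rule :: "'p interp \<Rightarrow> 'p rule \<Rightarrow> bool" where
  "holds_rule M (Rule H body) =
     (\<forall>t. (\<forall>A\<in>set body. holds M t A) \<longrightarrow> holds M t (hatom_mtl H))"
| "holds_rule M (Constraint body) = (\<forall>t. \<not> (\<forall>A\<in>set body. holds M t A))"

fun wf_rule :: "'p rule \<Rightarrow> bool" where
  "wf_rule (Rule H body) = (wf_mtl (hatom_mtl H) \<and> (\<forall>A\<in>set body. wf_mtl A))"
| "wf_rule (Constraint body) = (\<forall>A\<in>set body. wf_mtl A)"

fun props_rule :: "'p rule \<Rightarrow> 'p set" where
  "props_rule (Rule H body) = props_mtl (hatom_mtl H) \<union> (\<Union>A\<in>set body. props_mtl A)"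
| "props_rule (Constraint body) = (\<Union>A\<in>set body. props_mtl A)"

definition program :: "'p rule set \<Rightarrow> bool" where
  "program \<Pi> \<longleftrightarrow> finite \<Pi> \<and> (\<forall>r\<in>\<Pi>. wf_rule r)"

definition props_prog :: "'p rule set \<Rightarrow> 'p set" where
  "props_prog \<Pi> = (\<Union>r\<in>\<Pi>. props_rule r)"

definition model_prog :: "'p interp \<Rightarrow> 'p rule set \<Rightarrow> bool" where
  "model_prog M \<Pi> \<longleftrightarrow> (\<forall>r\<in>\<Pi>. holds_rule M r)"

type_synonym dint = "int option \<times> int option"

fun dint_mem :: "dint \<Rightarrow> int \<Rightarrow> bool" where
  "dint_mem (lo, hi) t = ((case lo of None \<Rightarrow> True | Some a \<Rightarrow> a \<le> t) \<and>
                          (case hi of None \<Rightarrow> True | Some b \<Rightarrow> t \<le> b))"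

type_synonym 'p fact = "'p \<times> dint"

definition dataset :: "'p fact set \<Rightarrow> bool" where
  "dataset D \<longleftrightarrow> finite D"

definition props_data :: "'p fact set \<Rightarrow> 'p set" where
  "props_data D = fst ` D"

definition model_data :: "'p interp \<Rightarrow> 'p fact set \<Rightarrow> bool" where
  "model_data M D \<longleftrightarrow> (\<forall>(p, \<iota>)\<in>D. \<forall>t. dint_mem \<iota> t \<longrightarrow> M t p)"

definition consistent :: "'p rule set \<Rightarrow> 'p fact set \<Rightarrow> bool" where
  "consistent \<Pi> D \<longleftrightarrow> (\<exists>M. model_data M D \<and> model_prog M \<Pi>)"

definition entails :: "'p fact set \<Rightarrow> 'p rule set \<Rightarrow> 'p \<Rightarrow> dint \<Rightarrow> bool" where
  "entails D \<Pi> Q \<iota> \<longleftrightarrow>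
     (\<forall>M. model_data M D \<and> model_prog M \<Pi> \<longrightarrow> (\<forall>t. dint_mem \<iota> t \<longrightarrow> M t Q))"

end

theory Submission
  imports Defs
begin

text \<open>If Q fails at some t0 in [tB, tE] in a model of D and \<Pi>, the fresh propositions can be
  reinterpreted: B only at tB - 1, E only at tE + 1, and Q' exactly where Q U[0,\<infinity>) E holds.
  The new rule is then satisfied, and so is the constraint, since the Q-run from tB to tE is
  broken at t0 and hence Q' fails at tB - 1. Conversely, if Q holds throughout [tB, tE] in every
  model of D and \<Pi>, then every model of the extended dataset and program satisfies
  Q U[0,\<infinity>) E, hence Q', at tB - 1, where B holds as well.\<close>

lemma holds_cong:
  assumes "\<And>p t. p \<in> props_mtl A \<Longrightarrow> M t p = M' t p"
  shows "holds M t A = holds M' t A"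
  using assms by (induction A arbitrary: t) auto

lemma holds_rule_cong:
  assumes "\<And>p t. p \<in> props_rule r \<Longrightarrow> M t p = M' t p"
  shows "holds_rule M r = holds_rule M' r"
proof (cases r)
  case (Rule H body)
  with assms have "holds M t (hatom_mtl H) = holds M' t (hatom_mtl H)" for t
    by (intro holds_cong) auto
  moreover from Rule assms have "holds M t A = holds M' t A" if "A \<in> set body" for A t
    using that by (intro holds_cong) auto
  ultimately show ?thesis using Rule by auto
next
  case (Constraint body)
  with assms have "holds M t A = holds M' t A" if "A \<in> set body" for A t
    using that by (intro holds_cong) auto
  then show ?thesis using Constraint by auto
qed

lemma model_prog_cong:
  assumes "\<And>p t. p \<in> props_prog \<Pi> \<Longrightarrow> M t p = M' t p"
  shows "model_prog M \<Pi> = model_prog M' \<Pi>"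
proof -
  have "holds_rule M r = holds_rule M' r" if "r \<in> \<Pi>" for r
    using assms that unfolding props_prog_def by (intro holds_rule_cong) blast
  then show ?thesis unfolding model_prog_def by blast
qed

lemma model_data_cong:
  assumes "\<And>p t. p \<in> props_data D \<Longrightarrow> M t p = M' t p"
  shows "model_data M D = model_data M' D"
  using assms unfolding model_data_def props_data_def by force

lemma dint_mem_point: "dint_mem (Some a, Some a) t \<longleftrightarrow> t = a"
  by auto

lemma model_data_insert:
  "model_data M (insert (p, \<iota>) D) \<longleftrightarrow> (\<forall>t. dint_mem \<iota> t \<longrightarrow> M t p) \<and> model_data M D"
  unfolding model_data_def by auto

definition query_program :: "'p rule set \<Rightarrow> 'p \<Rightarrow> 'p \<Rightarrow> 'p \<Rightarrow> 'p \<Rightarrow> 'p rule set" where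
  "query_program \<Pi> Q B E Q' =
     insert (Rule (HProp Q') [Until (MProp Q) (0, None) (MProp E)])
       (insert (Constraint [MProp B, MProp Q']) \<Pi>)"

definition query_dataset :: "'p fact set \<Rightarrow> 'p \<Rightarrow> 'p \<Rightarrow> int \<Rightarrow> int \<Rightarrow> 'p fact set" where
  "query_dataset D B E tB tE =
     insert (B, (Some (tB - 1), Some (tB - 1))) (insert (E, (Some (tE + 1), Some (tE + 1))) D)"

lemma model_prog_query_program:
  "model_prog M (query_program \<Pi> Q B E Q') \<longleftrightarrow>
     (\<forall>t. holds M t (Until (MProp Q) (0, None) (MProp E)) \<longrightarrow> M t Q') \<and>
     (\<forall>t. \<not> (M t B \<and> M t Q')) \<and> model_prog M \<Pi>"
  unfolding query_program_def model_prog_def by simp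

lemma model_data_query_dataset:
  "model_data M (query_dataset D B E tB tE) \<longleftrightarrow>
     M (tB - 1) B \<and> M (tE + 1) E \<and> model_data M D"
  unfolding query_dataset_def model_data_insert dint_mem_point by simp

lemma entails_imp_query_inconsistent:
  assumes "tB \<le> tE" and "entails D \<Pi> Q (Some tB, Some tE)"
  shows "\<not> consistent (query_program \<Pi> Q B E Q') (query_dataset D B E tB tE)"
proof
  assume "consistent (query_program \<Pi> Q B E Q') (query_dataset D B E tB tE)"
  then obtain M where B: "M (tB - 1) B" and E: "M (tE + 1) E"
    and D: "model_data M D" and \<Pi>: "model_prog M \<Pi>"
    and until_rule: "\<And>t. holds M t (Until (MProp Q) (0, None) (MProp E)) \<Longrightarrow> M t Q'"
    and constraint: "\<And>t. \<not> (M t B \<and> M t Q')"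
    unfolding consistent_def model_prog_query_program model_data_query_dataset by blast
  from assms(2) D \<Pi> have "\<forall>s. dint_mem (Some tB, Some tE) s \<longrightarrow> M s Q"
    unfolding entails_def by blast
  then have "M s Q" if "tB \<le> s" "s \<le> tE" for s
    using that by simp
  with E assms(1) have "holds M (tB - 1) (Until (MProp Q) (0, None) (MProp E))"
    by (auto intro!: exI[of _ "tE + 1"])
  with until_rule constraint B show False by blast
qed

definition query_extension ::
    "'p interp \<Rightarrow> 'p \<Rightarrow> 'p \<Rightarrow> 'p \<Rightarrow> 'p \<Rightarrow> int \<Rightarrow> int \<Rightarrow> 'p interp" where
  "query_extension M Q B E Q' tB tE = (\<lambda>t p.
     if p = B then t = tB - 1
     else if p = E then t = tE + 1
     else if p = Q' then t \<le> tE + 1 \<and> (\<forall>s. t < s \<and> s < tE + 1 \<longrightarrow> M s Q)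
     else M t p)"

lemma query_extension_other:
  "p \<notin> {B, E, Q'} \<Longrightarrow> query_extension M Q B E Q' tB tE t p = M t p"
  unfolding query_extension_def by simp

lemma query_extension_simps:
  assumes "distinct [Q, B, E, Q']"
  shows "query_extension M Q B E Q' tB tE t B \<longleftrightarrow> t = tB - 1"
    and "query_extension M Q B E Q' tB tE t E \<longleftrightarrow> t = tE + 1"
    and "query_extension M Q B E Q' tB tE t Q' \<longleftrightarrow>
           t \<le> tE + 1 \<and> (\<forall>s. t < s \<and> s < tE + 1 \<longrightarrow> M s Q)"
    and "query_extension M Q B E Q' tB tE t Q \<longleftrightarrow> M t Q"
  using assms unfolding query_extension_def by auto

lemma holds_until_query_extension:
  assumes "distinct [Q, B, E, Q']"
  shows "holds (query_extension M Q B E Q' tB tE) t (Until (MProp Q) (0, None) (MProp E)) \<longleftrightarrow>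
    query_extension M Q B E Q' tB tE t Q'"
  by (simp add: query_extension_simps[OF assms])

lemma not_entails_imp_query_consistent:
  assumes "distinct [Q, B, E, Q']"
    and fresh_prog: "{B, E, Q'} \<inter> props_prog \<Pi> = {}"
    and fresh_data: "{B, E, Q'} \<inter> props_data D = {}"
    and "\<not> entails D \<Pi> Q (Some tB, Some tE)"
  shows "consistent (query_program \<Pi> Q B E Q') (query_dataset D B E tB tE)"
proof -
  obtain M t0 where D: "model_data M D" and \<Pi>: "model_prog M \<Pi>"
    and t0: "tB \<le> t0" "t0 \<le> tE" and not_Q: "\<not> M t0 Q"
    using assms(4) unfolding entails_def by auto
  define M' where "M' = query_extension M Q B E Q' tB tE"
  note M'_simps = query_extension_simps[OF assms(1), of M tB tE, folded M'_def]
  have agree: "M' t p = M t p" if "p \<notin> {B, E, Q'}" for t p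
    using that unfolding M'_def by (rule query_extension_other)
  have "model_prog M' \<Pi> = model_prog M \<Pi>"
    by (rule model_prog_cong) (use agree fresh_prog in blast)
  with \<Pi> have "model_prog M' \<Pi>" by simp
  moreover have "model_data M' D = model_data M D"
    by (rule model_data_cong) (use agree fresh_data in blast)
  with D have "model_data M' D" by simp
  moreover have "holds M' t (Until (MProp Q) (0, None) (MProp E)) \<longleftrightarrow> M' t Q'" for t
    unfolding M'_def by (rule holds_until_query_extension[OF assms(1)])
  moreover have "\<not> (M' t B \<and> M' t Q')" for t
  proof -
    have "\<not> M' (tB - 1) Q'"
      using t0 not_Q by (auto simp: M'_simps intro!: exI[of _ t0])
    then show ?thesis by (metis M'_simps(1))
  qed
  moreover have "M' (tB - 1) B" "M' (tE + 1) E"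
    by (simp_all add: M'_simps)
  ultimately show ?thesis
    unfolding consistent_def model_prog_query_program model_data_query_dataset by blast
qed

theorem mainTheorem4:
  fixes \<Pi> :: "'p rule set" and D :: "'p fact set"
    and Q B E Q' :: 'p and tB tE :: int
  assumes "program \<Pi>" and "dataset D" and "tB \<le> tE"
    and "distinct [Q, B, E, Q']"
    and "B \<notin> props_prog \<Pi>" and "E \<notin> props_prog \<Pi>" and "Q' \<notin> props_prog \<Pi>"
    and "B \<notin> props_data D" and "E \<notin> props_data D" and "Q' \<notin> props_data D"
    and "consistent \<Pi> D"
  shows "entails D \<Pi> Q (Some tB, Some tE) \<longleftrightarrow>
    \<not> consistent
        (insert (Rule (HProp Q') [Until (MProp Q) (0, None) (MProp E)])
          (insert (Constraint [MProp B, MProp Q']) \<Pi>))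
        (insert (B, (Some (tB - 1), Some (tB - 1)))
          (insert (E, (Some (tE + 1), Some (tE + 1))) D))"
proof -
  have fresh: "{B, E, Q'} \<inter> props_prog \<Pi> = {}" "{B, E, Q'} \<inter> props_data D = {}"
    using assms(5-10) by blast+
  let ?\<Pi>Q = "query_program \<Pi> Q B E Q'" and ?DQ = "query_dataset D B E tB tE"
  have "entails D \<Pi> Q (Some tB, Some tE) \<Longrightarrow> \<not> consistent ?\<Pi>Q ?DQ"
    by (rule entails_imp_query_inconsistent[OF assms(3)])
  moreover have "\<not> entails D \<Pi> Q (Some tB, Some tE) \<Longrightarrow> consistent ?\<Pi>Q ?DQ"
    by (rule not_entails_imp_query_consistent[OF assms(4) fresh])
  ultimately show ?thesis
    unfolding query_program_def query_dataset_def by blast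
qed

end
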